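(* Let $T$ be a (not necessarily binary) planted tree over $L$, let $T'$ and $T''$ be binary trees that both resolve $T$, and let $\sigma$ be a fixed leaf ordering. Let $v$ be a vertex of $T$ with children $u_1,\dots,u_p$ ($p\ge2$), and for each $t$ let $s_t=\min\{\sigma(l): l\in L(T_{u_t})\}$. For a binary resolution $\tilde T\in\{T',T''\}$ let $V_I(B_{\tilde T})$ be the set of internal vertices $w$ of $\tilde T$ whose cluster $cl_{\tilde T}(w)$ is the union of the clusters $L(T_{u_t})$ over at least two children $u_t$ of $v$. Then $$\sigma(V_I(B_{T'}))=\sigma(V_I(B_{T''}))=\{-s_t : 1\le t\le p,\ s_t\ne\min\{s_1,\dots,s_p\}\},$$ where $\sigma(\cdot)$ denotes the OLA index of a vertex computed in $T'$, respectively $T''$.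
   Context: Trees. Fix a finite label set $L$ containing a distinguished label $\rho$, and let $n=|L\setminus\{\rho\}|$. A planted tree $T$ over $L$ is a rooted tree whose top vertex is labeled $\rho$ and has exactly one child $r(T)$ (the root), in which every other non-leaf vertex has at least two children, and whose leaves are bijectively labeled by $L\setminus\{\rho\}$; it is binary if every non-leaf vertex other than $\rho$ has exactly two children. For a vertex $v$, $T_v$ is the subtree rooted at $v$ and $cl(v)=L(T_v)$ is its cluster. A binary tree $T'$ resolves $T$ if $L(T')=L(T)$ and there is a set of edges of $T'$ whose contraction yields $T$. OLA indexing. A leaf ordering is a bijection $\sigma:L\setminus\{\rho\}\to\{0,\dots,n-1\}$. For a binary tree $T'$ over $L$ and a vertex $v\ne\rho$, let $\mu(v)=\min\{\sigma(l): l\in L(T'_v)\setminus\{\rho\}\}$; each leaf $l$ gets index $\sigma(l)$, and each internal vertex $v$ (not a leaf, not $\rho$) with children $v_1,v_2$ gets index $\sigma(v):=-\max\{\mu(v_1),\mu(v_2)\}$. *)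

theory Defs
  imports Main "HOL-Library.Multiset"
begin

text \<open>The planting vertex labelled rho is left
implicit: a planted tree is represented by its root r(T) (the unique child of rho).
Vertices of a tree are represented by the subtrees rooted at them.\<close>

datatype 'a tree = Leaf 'a | Node "'a tree list"

fun children :: "'a tree \<Rightarrow> 'a tree list" where
  "children (Leaf a) = []"
| "children (Node ts) = ts"

fun leaves_list :: "'a tree \<Rightarrow> 'a list" where
  "leaves_list (Leaf a) = [a]"
| "leaves_list (Node ts) = concat (map leaves_list ts)"

definition cl :: "'a tree \<Rightarrow> 'a set" where
  "cl t = set (leaves_list t)"

fun vertices :: "'a tree \<Rightarrow> 'a tree set" where
  "vertices (Leaf a) = {Leaf a}"
| "vertices (Node ts) = insert (Node ts) (\<Union>t\<in>set ts. vertices t)"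

fun is_internal :: "'a tree \<Rightarrow> bool" where
  "is_internal (Leaf a) = False"
| "is_internal (Node ts) = True"

definition planted_tree :: "'a set \<Rightarrow> 'a \<Rightarrow> 'a tree \<Rightarrow> bool" where
  "planted_tree L \<rho> T \<longleftrightarrow> finite L \<and> \<rho> \<in> L \<and>
     distinct (leaves_list T) \<and> set (leaves_list T) = L - {\<rho>} \<and>
     (\<forall>v\<in>vertices T. is_internal v \<longrightarrow> length (children v) \<ge> 2)"

definition binary_tree :: "'a set \<Rightarrow> 'a \<Rightarrow> 'a tree \<Rightarrow> bool" where
  "binary_tree L \<rho> T \<longleftrightarrow> planted_tree L \<rho> T \<and>
     (\<forall>v\<in>vertices T. is_internal v \<longrightarrow> length (children v) = 2)"

text \<open>Contraction of a single edge between two non-leaf vertices (the edge from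
rho to the root is not contracted, as the result must again be planted).\<close>
inductive contract1 :: "'a tree \<Rightarrow> 'a tree \<Rightarrow> bool" where
  here: "contract1 (Node (xs @ [Node ys] @ zs)) (Node (xs @ ys @ zs))"
| deeper: "contract1 t t' \<Longrightarrow> contract1 (Node (xs @ [t] @ zs)) (Node (xs @ [t'] @ zs))"

inductive tree_iso :: "'a tree \<Rightarrow> 'a tree \<Rightarrow> bool" where
  iso_leaf: "tree_iso (Leaf (a::'a)) (Leaf a)"
| iso_node: "list_all2 tree_iso xs (ys' :: 'a tree list) \<Longrightarrow> mset ys' = mset ys \<Longrightarrow> tree_iso (Node xs) (Node ys)"

definition resolves :: "'a set \<Rightarrow> 'a \<Rightarrow> 'a tree \<Rightarrow> 'a tree \<Rightarrow> bool" where
  "resolves L \<rho> T' T \<longleftrightarrow> binary_tree L \<rho> T' \<and> cl T' = cl T \<and>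
     (\<exists>T0. contract1\<^sup>*\<^sup>* T' T0 \<and> tree_iso T0 T)"

definition leaf_ordering :: "'a set \<Rightarrow> 'a \<Rightarrow> ('a \<Rightarrow> nat) \<Rightarrow> bool" where
  "leaf_ordering L \<rho> \<sigma> \<longleftrightarrow> bij_betw \<sigma> (L - {\<rho>}) {0..<card (L - {\<rho>})}"

definition mu :: "('a \<Rightarrow> nat) \<Rightarrow> 'a tree \<Rightarrow> nat" where
  "mu \<sigma> v = Min (\<sigma> ` cl v)"

fun ola_index :: "('a \<Rightarrow> nat) \<Rightarrow> 'a tree \<Rightarrow> int" where
  "ola_index \<sigma> (Leaf l) = int (\<sigma> l)"
| "ola_index \<sigma> (Node ts) = - int (Max (mu \<sigma> ` set ts))"

definition VI :: "'a tree \<Rightarrow> 'a tree \<Rightarrow> 'a tree set" where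
  "VI v Tt = {w \<in> vertices Tt. is_internal w \<and>
      (\<exists>S \<subseteq> set (children v). card S \<ge> 2 \<and> cl w = \<Union> (cl ` S))}"

end

theory Submission
  imports Defs
begin

text \<open>
Let P be the partition of cl(v) into the clusters of the children of v. Every cluster of T is
a cluster of each of its resolutions, so in a binary resolution T' the set cl(v) is the cluster
of a vertex x and every block of P is the cluster of a vertex below x; the vertices of V_I are
the internal vertices below x whose cluster is a union of at least two blocks. Induction on the
subtree at x: its root lies in V_I, and its children a, b split P into partitions of cl(a) and
cl(b). The index of the root is -max(mu(a), mu(b)), where mu(a) and mu(b) are the smallest block
minima on the two sides, so together with the non-minimal block minima of each side (induction
hypothesis) it contributes exactly the non-minimal block minima of P. Nothing in this depends on
how T' resolves the vertex v.
\<close>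

lemma distinct_concat_map_disjoint:
  "distinct (concat (map f xs)) \<Longrightarrow> x \<in> set xs \<Longrightarrow> y \<in> set xs \<Longrightarrow> x \<noteq> y \<Longrightarrow>
    set (f x) \<inter> set (f y) = {}"
  by (induction xs) auto

lemma cl_Leaf [simp]: "cl (Leaf a) = {a}"
  by (simp add: cl_def)

lemma cl_Node [simp]: "cl (Node ts) = (\<Union>t\<in>set ts. cl t)"
  by (simp add: cl_def)

lemma finite_cl [simp]: "finite (cl t)"
  by (simp add: cl_def)

lemma self_in_vertices [simp]: "t \<in> vertices t"
  by (cases t) auto

lemma finite_vertices [simp]: "finite (vertices t)"
  by (induction t) auto

lemma vertices_subset: "x \<in> vertices t \<Longrightarrow> vertices x \<subseteq> vertices t"
  by (induction t) auto

lemma cl_subset: "x \<in> vertices t \<Longrightarrow> cl x \<subseteq> cl t"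
  by (induction t) auto

lemma distinct_leaves_list_vertex:
  "x \<in> vertices t \<Longrightarrow> distinct (leaves_list t) \<Longrightarrow> distinct (leaves_list x)"
  by (induction t) (auto simp: distinct_concat_iff)

lemma cl_nonempty_if_children:
  "\<forall>w\<in>vertices t. is_internal w \<longrightarrow> children w \<noteq> [] \<Longrightarrow> cl t \<noteq> {}"
proof (induction t)
  case (Node ts)
  then obtain c where "c \<in> set ts"
    by (cases ts) auto
  with Node show ?case
    by auto
qed simp

lemma planted_tree_cl_nonempty: "planted_tree L \<rho> T \<Longrightarrow> x \<in> vertices T \<Longrightarrow> cl x \<noteq> {}"
  unfolding planted_tree_def
  by (rule cl_nonempty_if_children) (use vertices_subset in fastforce)

fun is_binary :: "'a tree \<Rightarrow> bool" where
  "is_binary (Leaf a) = True"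
| "is_binary (Node [a, b]) = (is_binary a \<and> is_binary b)"
| "is_binary (Node ts) = False"

lemma is_binary_iff:
  "is_binary t \<longleftrightarrow> (\<forall>w\<in>vertices t. is_internal w \<longrightarrow> length (children w) = 2)"
  by (induction t rule: is_binary.induct) auto

lemma is_binary_vertex: "is_binary t \<Longrightarrow> x \<in> vertices t \<Longrightarrow> is_binary x"
  by (induction t rule: is_binary.induct) auto

lemma cl_nonempty: "is_binary t \<Longrightarrow> cl t \<noteq> {}"
  by (induction t rule: is_binary.induct) auto

lemma in_vertices_if_cl_subset:
  assumes "is_binary t" "distinct (leaves_list t)" "x \<in> vertices t" "w \<in> vertices t"
    and "cl w \<subseteq> cl x"
  shows "w \<in> vertices x"
  using assms
proof (induction t rule: is_binary.induct)
  case (2 a b)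
  have disj: "cl a \<inter> cl b = {}"
    using "2.prems"(2) by (simp add: cl_def)
  have ne: "cl w \<noteq> {}" "cl a \<noteq> {}" "cl b \<noteq> {}"
    using "2.prems"(1) is_binary_vertex[OF "2.prems"(1,4)] by (auto simp: cl_nonempty)
  consider "x = Node [a, b]" | "x \<in> vertices a" | "x \<in> vertices b"
    using "2.prems"(3) by auto
  then show ?case
  proof cases
    case 1
    then show ?thesis using "2.prems"(4) by simp
  next
    case 2
    then have "cl w \<subseteq> cl a" using "2.prems"(5) cl_subset by blast
    then have "w \<in> vertices a"
      using "2.prems"(4) ne disj cl_subset[of w b] by auto
    then show ?thesis using "2.IH"(1) "2.prems" 2 distinct_leaves_list_vertex by auto
  next
    case 3
    then have "cl w \<subseteq> cl b" using "2.prems"(5) cl_subset by blast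
    then have "w \<in> vertices b"
      using "2.prems"(4) ne disj cl_subset[of w a] by auto
    then show ?thesis using "2.IH"(2) "2.prems" 3 distinct_leaves_list_vertex by auto
  qed
qed auto

definition clusters :: "'a tree \<Rightarrow> 'a set set" where
  "clusters t = cl ` vertices t"

lemma clusters_Leaf [simp]: "clusters (Leaf a) = {{a}}"
  by (simp add: clusters_def)

lemma clusters_Node [simp]:
  "clusters (Node ts) = insert (cl (Node ts)) (\<Union>t\<in>set ts. clusters t)"
  by (simp add: clusters_def image_UN del: cl_Node)

lemma finite_clusters [simp]: "finite (clusters t)"
  by (simp add: clusters_def)

lemma clusters_subset_cl: "B \<in> clusters t \<Longrightarrow> B \<subseteq> cl t"
  unfolding clusters_def using cl_subset by blast

lemma finite_cluster: "B \<in> clusters t \<Longrightarrow> finite B"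
  using clusters_subset_cl finite_cl finite_subset by blast

lemma clusters_nonempty: "is_binary t \<Longrightarrow> B \<in> clusters t \<Longrightarrow> B \<noteq> {}"
  unfolding clusters_def using cl_nonempty is_binary_vertex by blast

lemma contract1_leaves_list: "contract1 t t' \<Longrightarrow> leaves_list t' = leaves_list t"
  by (induction rule: contract1.induct) auto

lemma contract1_clusters: "contract1 t t' \<Longrightarrow> clusters t' \<subseteq> clusters t"
proof (induction rule: contract1.induct)
  case (here xs ys zs)
  have "cl (Node (xs @ ys @ zs)) = cl (Node (xs @ [Node ys] @ zs))"
    by (simp add: Un_left_commute)
  then show ?case
    by (simp del: cl_Node) blast
next
  case (deeper t t' xs zs)
  then have "cl (Node (xs @ [t'] @ zs)) = cl (Node (xs @ [t] @ zs))"
    by (simp add: cl_def contract1_leaves_list)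
  with deeper.IH show ?case
    by (simp del: cl_Node) blast
qed

lemma contract1_rtranclp_clusters: "contract1\<^sup>*\<^sup>* t t' \<Longrightarrow> clusters t' \<subseteq> clusters t"
proof (induction rule: rtranclp_induct)
  case (step t' t'')
  then show ?case using contract1_clusters by blast
qed simp

lemma tree_iso_clusters: "tree_iso t t' \<Longrightarrow> cl t' = cl t \<and> clusters t' \<subseteq> clusters t"
proof (induction rule: tree_iso.induct)
  case (iso_node xs ys' ys)
  have set_ys: "set ys = set ys'"
    using iso_node.hyps by (metis set_mset_mset)
  have "map cl ys' = map cl xs"
    using iso_node.IH by (induction rule: list_all2_induct) auto
  then have "cl (Node ys) = cl (Node xs)"
    by (simp add: set_ys) (metis set_map)
  moreover have "(\<Union>t\<in>set ys'. clusters t) \<subseteq> (\<Union>t\<in>set xs. clusters t)"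
    using iso_node.IH by (induction rule: list_all2_induct) auto
  ultimately show ?case
    by (simp add: set_ys del: cl_Node) blast
qed auto

lemma resolves_clusters: "resolves L \<rho> T' T \<Longrightarrow> clusters T \<subseteq> clusters T'"
  unfolding resolves_def
  using contract1_rtranclp_clusters tree_iso_clusters by blast

lemma Un_Diff_Min:
  fixes A B :: "'b::linorder set"
  assumes "finite A" "finite B" "A \<noteq> {}" "B \<noteq> {}" "A \<inter> B = {}"
  shows "A \<union> B - {Min (A \<union> B)} = insert (max (Min A) (Min B)) (A - {Min A} \<union> (B - {Min B}))"
proof -
  have in_AB: "Min A \<in> A" "Min B \<in> B"
    using assms by simp_all
  then have "Min A \<noteq> Min B"
    using assms(5) by auto
  then consider "Min A < Min B" | "Min B < Min A"
    by (meson linorder_neqE)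
  then show ?thesis
  proof cases
    case 1
    then have "Min (A \<union> B) = Min A" "Min A \<notin> B"
      using assms in_AB by (auto simp: Min_Un)
    then show ?thesis
      using 1 in_AB by (auto simp: max_def)
  next
    case 2
    then have "Min (A \<union> B) = Min B" "Min B \<notin> A"
      using assms in_AB by (auto simp: Min_Un)
    then show ?thesis
      using 2 in_AB by (auto simp: max_def)
  qed
qed

lemma Diff_Min_card_less_2:
  assumes "finite A" "card A < 2"
  shows "A - {Min A} = {}"
proof (cases "A = {}")
  case False
  then have "Min A \<in> A"
    using assms(1) by simp
  moreover have "\<forall>a\<in>A. \<forall>b\<in>A. a = b"
    using assms card_le_Suc0_iff_eq[of A] by simp
  ultimately show ?thesis
    by blast
qed simp

definition mu_set :: "('a \<Rightarrow> nat) \<Rightarrow> 'a set \<Rightarrow> nat" where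
  "mu_set \<sigma> B = Min (\<sigma> ` B)"

lemma mu_eq_mu_set: "mu \<sigma> v = mu_set \<sigma> (cl v)"
  by (simp add: mu_def mu_set_def)

lemma mu_set_Union:
  assumes "finite P" "P \<noteq> {}" "\<And>B. B \<in> P \<Longrightarrow> finite B \<and> B \<noteq> {}"
  shows "mu_set \<sigma> (\<Union>P) = Min (mu_set \<sigma> ` P)"
proof -
  define m where "m = Min (mu_set \<sigma> ` P)"
  have "m \<le> \<sigma> x" if "B \<in> P" "x \<in> B" for B x
  proof -
    have "m \<le> mu_set \<sigma> B"
      using assms(1) that(1) by (simp add: m_def)
    also have "\<dots> \<le> \<sigma> x"
      using assms(3)[OF that(1)] that(2) by (simp add: mu_set_def)
    finally show ?thesis .
  qed
  moreover have "\<exists>B\<in>P. \<exists>x\<in>B. \<sigma> x = m"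
  proof -
    have "m \<in> mu_set \<sigma> ` P"
      using assms(1,2) by (simp add: m_def)
    then obtain B where "B \<in> P" "m = mu_set \<sigma> B"
      by blast
    then show ?thesis
      using Min_in[of "\<sigma> ` B"] assms(3) by (fastforce simp: mu_set_def)
  qed
  moreover have "finite (\<Union>P)"
    using assms by auto
  ultimately show ?thesis
    unfolding mu_set_def[of _ "\<Union>P"] m_def[symmetric]
    by (intro Min_eqI) auto
qed

lemma inj_on_mu_set:
  assumes "inj_on \<sigma> (\<Union>P)" "pairwise disjnt P" "\<And>B. B \<in> P \<Longrightarrow> finite B \<and> B \<noteq> {}"
  shows "inj_on (mu_set \<sigma>) P"
proof (rule inj_onI)
  fix B C assume B: "B \<in> P" and C: "C \<in> P" and eq: "mu_set \<sigma> B = mu_set \<sigma> C"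
  have "mu_set \<sigma> B \<in> \<sigma> ` B" "mu_set \<sigma> C \<in> \<sigma> ` C"
    unfolding mu_set_def using assms(3) B C by simp_all
  then obtain x y where "x \<in> B" "y \<in> C" "\<sigma> x = \<sigma> y"
    using eq by auto
  moreover have "x = y"
    using calculation B C assms(1) by (meson UnionI inj_onD)
  ultimately show "B = C"
    using assms(2) B C by (meson disjnt_iff pairwiseD)
qed

definition nonmin_indices :: "('a \<Rightarrow> nat) \<Rightarrow> 'a set set \<Rightarrow> int set" where
  "nonmin_indices \<sigma> P = uminus ` int ` (mu_set \<sigma> ` P - {Min (mu_set \<sigma> ` P)})"

lemma nonmin_indices_card_less_2: "finite P \<Longrightarrow> card P < 2 \<Longrightarrow> nonmin_indices \<sigma> P = {}"
  unfolding nonmin_indices_def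
  by (metis Diff_Min_card_less_2 card_image_le finite_imageI image_empty le_less_trans)

lemma nonmin_indices_Un:
  assumes "finite Pa" "finite Pb" "Pa \<noteq> {}" "Pb \<noteq> {}" "Pa \<inter> Pb = {}"
    and "inj_on \<sigma> (\<Union>(Pa \<union> Pb))" "pairwise disjnt (Pa \<union> Pb)"
    and "\<And>B. B \<in> Pa \<union> Pb \<Longrightarrow> finite B \<and> B \<noteq> {}"
  shows "nonmin_indices \<sigma> (Pa \<union> Pb) = insert (- int (max (mu_set \<sigma> (\<Union>Pa)) (mu_set \<sigma> (\<Union>Pb))))
    (nonmin_indices \<sigma> Pa \<union> nonmin_indices \<sigma> Pb)"
proof -
  define Ma Mb where "Ma = mu_set \<sigma> ` Pa" and "Mb = mu_set \<sigma> ` Pb"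
  have "inj_on (mu_set \<sigma>) (Pa \<union> Pb)"
    using inj_on_mu_set assms(6-8) by blast
  then have "Ma \<inter> Mb = {}"
    unfolding Ma_def Mb_def using assms(5)
    by (metis Un_upper1 Un_upper2 image_empty inj_on_image_Int)
  moreover have "mu_set \<sigma> (\<Union>Pa) = Min Ma" "mu_set \<sigma> (\<Union>Pb) = Min Mb"
    unfolding Ma_def Mb_def using assms(1-4,8) by (simp_all add: mu_set_Union)
  ultimately show ?thesis
    using Un_Diff_Min[of Ma Mb] assms(1-4)
    by (simp add: nonmin_indices_def image_Un Ma_def Mb_def)
qed

lemma block_neq_Union:
  assumes "pairwise disjnt P" "{} \<notin> P" "2 \<le> card P" "B \<in> P"
  shows "B \<noteq> \<Union>P"
proof
  assume "B = \<Union>P"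
  have "P \<noteq> {B}"
    using assms(3) by auto
  then obtain C where "C \<in> P" "C \<noteq> B"
    using assms(4) by blast
  moreover have "C \<subseteq> B"
    using \<open>C \<in> P\<close> \<open>B = \<Union>P\<close> by blast
  ultimately show False
    using assms(1,2,4) by (metis disjnt_subset1 disjnt_self_iff_empty pairwiseD)
qed

lemma child_eq_if_cl_overlap:
  assumes "distinct (leaves_list (Node ts))" "c \<in> set ts" "c' \<in> set ts" "cl c' \<inter> cl c \<noteq> {}"
  shows "c' = c"
proof (rule ccontr)
  assume "c' \<noteq> c"
  then have "cl c' \<inter> cl c = {}"
    using distinct_concat_map_disjoint[of leaves_list ts c' c] assms(1-3) by (simp add: cl_def)
  with assms(4) show False ..
qed

lemma partition_child_clusters:
  assumes "distinct (leaves_list (Node ts))" "P \<subseteq> clusters (Node ts)" "\<Union>P = cl (Node ts)"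
    and "cl (Node ts) \<notin> P" "{} \<notin> P" "c \<in> set ts"
  shows "{B \<in> P. B \<subseteq> cl c} = P \<inter> clusters c" and "\<Union>(P \<inter> clusters c) = cl c"
proof -
  have child: "\<exists>c'\<in>set ts. B \<in> clusters c'" if "B \<in> P" for B
    using that assms(2,4) by auto
  note same_child = child_eq_if_cl_overlap[OF assms(1,6)]
  show "{B \<in> P. B \<subseteq> cl c} = P \<inter> clusters c"
  proof
    show "{B \<in> P. B \<subseteq> cl c} \<subseteq> P \<inter> clusters c"
    proof safe
      fix B assume "B \<in> P" "B \<subseteq> cl c"
      then obtain c' where "c' \<in> set ts" "B \<in> clusters c'"
        using child by blast
      moreover have "B \<noteq> {}"
        using \<open>B \<in> P\<close> assms(5) by blast
      ultimately have "c' = c"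
        using same_child \<open>B \<subseteq> cl c\<close> clusters_subset_cl by blast
      then show "B \<in> clusters c"
        using \<open>B \<in> clusters c'\<close> by simp
    qed
    show "P \<inter> clusters c \<subseteq> {B \<in> P. B \<subseteq> cl c}"
      using clusters_subset_cl by blast
  qed
  show "\<Union>(P \<inter> clusters c) = cl c"
  proof
    show "\<Union>(P \<inter> clusters c) \<subseteq> cl c"
      using clusters_subset_cl by blast
    show "cl c \<subseteq> \<Union>(P \<inter> clusters c)"
    proof
      fix x assume "x \<in> cl c"
      then have "x \<in> \<Union>P"
        using assms(3,6) by auto
      then obtain B c' where "B \<in> P" "x \<in> B" "c' \<in> set ts" "B \<in> clusters c'"
        using child by blast
      moreover have "c' = c"
        using same_child calculation \<open>x \<in> cl c\<close> clusters_subset_cl by blast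
      ultimately show "x \<in> \<Union>(P \<inter> clusters c)"
        by blast
    qed
  qed
qed

definition union_vertices :: "'a tree \<Rightarrow> 'a set set \<Rightarrow> 'a tree set" where
  "union_vertices t P = {w \<in> vertices t. is_internal w \<and> (\<exists>S\<subseteq>P. 2 \<le> card S \<and> cl w = \<Union>S)}"

lemma union_vertices_card_less_2: "finite P \<Longrightarrow> card P < 2 \<Longrightarrow> union_vertices t P = {}"
  unfolding union_vertices_def by (auto dest: card_mono)

lemma union_vertices_Node:
  assumes "2 \<le> card P" "\<Union>P = cl (Node ts)"
  shows "union_vertices (Node ts) P = insert (Node ts) (\<Union>t\<in>set ts. union_vertices t P)"
  using assms unfolding union_vertices_def by (auto simp del: cl_Node)

lemma union_vertices_restrict: "union_vertices t {B \<in> P. B \<subseteq> cl t} = union_vertices t P"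
proof -
  have "S \<subseteq> {B \<in> P. B \<subseteq> cl t}" if "w \<in> vertices t" "S \<subseteq> P" "cl w = \<Union>S" for w S
    using that(2,3) cl_subset[OF that(1)] by blast
  moreover have "{B \<in> P. B \<subseteq> cl t} \<subseteq> P"
    by blast
  ultimately show ?thesis
    unfolding union_vertices_def by (meson order_trans)
qed

lemma union_vertices_subtree:
  assumes "is_binary t" "distinct (leaves_list t)" "x \<in> vertices t" "\<Union>P \<subseteq> cl x"
  shows "union_vertices t P = union_vertices x P"
proof -
  have "w \<in> vertices x" if "w \<in> vertices t" "S \<subseteq> P" "cl w = \<Union>S" for w S
    using in_vertices_if_cl_subset[OF assms(1-3) that(1)] that(2,3) assms(4) by blast
  then show ?thesis
    using vertices_subset[OF assms(3)] unfolding union_vertices_def by blast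
qed

lemma partition_split_Node2:
  assumes "is_binary (Node [a, b])" "distinct (leaves_list (Node [a, b]))"
    and "P \<subseteq> clusters (Node [a, b])" "pairwise disjnt P" "\<Union>P = cl (Node [a, b])" "2 \<le> card P"
  defines "Pa \<equiv> P \<inter> clusters a" and "Pb \<equiv> P \<inter> clusters b"
  shows "P = Pa \<union> Pb" "Pa \<inter> Pb = {}" "\<Union>Pa = cl a" "\<Union>Pb = cl b"
    and "union_vertices (Node [a, b]) P
      = insert (Node [a, b]) (union_vertices a Pa \<union> union_vertices b Pb)"
proof -
  have nonempty: "{} \<notin> P"
    using assms(1,3) clusters_nonempty by blast
  have "cl (Node [a, b]) \<notin> P"
    using block_neq_Union[OF assms(4) nonempty assms(6)] assms(5) by auto
  note partition = partition_child_clusters[OF assms(2,3,5) this nonempty]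
  have Pa: "{B \<in> P. B \<subseteq> cl a} = Pa" "\<Union>Pa = cl a"
    and Pb: "{B \<in> P. B \<subseteq> cl b} = Pb" "\<Union>Pb = cl b"
    using partition unfolding Pa_def Pb_def by auto
  then show "\<Union>Pa = cl a" "\<Union>Pb = cl b"
    by simp_all
  show "P = Pa \<union> Pb"
    using assms(3) \<open>cl (Node [a, b]) \<notin> P\<close> unfolding Pa_def Pb_def by auto
  show "Pa \<inter> Pb = {}"
  proof (rule equals0I)
    fix B assume "B \<in> Pa \<inter> Pb"
    then have "B \<in> P" "B \<subseteq> cl a \<inter> cl b"
      using clusters_subset_cl unfolding Pa_def Pb_def by auto
    moreover have "cl a \<inter> cl b = {}"
      using assms(2) by (simp add: cl_def)
    ultimately show False
      using nonempty by auto
  qed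
  show "union_vertices (Node [a, b]) P
      = insert (Node [a, b]) (union_vertices a Pa \<union> union_vertices b Pb)"
    using union_vertices_Node[of P "[a, b]"] assms(5,6)
    by (simp add: union_vertices_restrict flip: Pa(1) Pb(1))
qed

lemma ola_index_union_vertices_root:
  assumes "is_binary t" "distinct (leaves_list t)" "inj_on \<sigma> (cl t)"
    and "P \<subseteq> clusters t" "pairwise disjnt P" "\<Union>P = cl t"
  shows "ola_index \<sigma> ` union_vertices t P = nonmin_indices \<sigma> P"
  using assms
proof (induction t arbitrary: P rule: is_binary.induct)
  case (1 l)
  then have "card P < 2"
    using card_mono[of "{{l}}" P] by simp
  with "1.prems"(4) show ?case
    by (simp add: union_vertices_card_less_2 nonmin_indices_card_less_2 finite_subset)
next
  case (2 a b)
  have fin: "finite P"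
    using finite_subset[OF "2.prems"(4) finite_clusters] .
  show ?case
  proof (cases "card P < 2")
    case True
    with fin show ?thesis
      by (simp add: union_vertices_card_less_2 nonmin_indices_card_less_2)
  next
    case False
    define Pa Pb where "Pa = P \<inter> clusters a" and "Pb = P \<inter> clusters b"
    from False have "2 \<le> card P"
      by simp
    note split = partition_split_Node2[OF "2.prems"(1,2,4,5,6) this, folded Pa_def Pb_def]
    have IH_a: "ola_index \<sigma> ` union_vertices a Pa = nonmin_indices \<sigma> Pa"
    proof (rule "2.IH"(1))
      show "inj_on \<sigma> (cl a)"
        using "2.prems"(3) by (rule inj_on_subset) simp
      show "pairwise disjnt Pa"
        using "2.prems"(5) by (rule pairwise_subset) (simp add: Pa_def)
    qed (use "2.prems"(1,2) split(3) in \<open>auto simp: Pa_def\<close>)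
    have IH_b: "ola_index \<sigma> ` union_vertices b Pb = nonmin_indices \<sigma> Pb"
    proof (rule "2.IH"(2))
      show "inj_on \<sigma> (cl b)"
        using "2.prems"(3) by (rule inj_on_subset) simp
      show "pairwise disjnt Pb"
        using "2.prems"(5) by (rule pairwise_subset) (simp add: Pb_def)
    qed (use "2.prems"(1,2) split(4) in \<open>auto simp: Pb_def\<close>)
    have "ola_index \<sigma> ` union_vertices (Node [a, b]) P
        = insert (- int (max (mu_set \<sigma> (\<Union>Pa)) (mu_set \<sigma> (\<Union>Pb))))
            (nonmin_indices \<sigma> Pa \<union> nonmin_indices \<sigma> Pb)"
      by (simp add: split(3-5) IH_a IH_b image_Un mu_eq_mu_set)
    also have "\<dots> = nonmin_indices \<sigma> (Pa \<union> Pb)"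
    proof (rule nonmin_indices_Un[symmetric])
      show "finite Pa" "finite Pb"
        using fin split(1) by auto
      show "Pa \<noteq> {}" "Pb \<noteq> {}"
        using split(3,4) cl_nonempty[of a] cl_nonempty[of b] "2.prems"(1) by auto
      show "inj_on \<sigma> (\<Union>(Pa \<union> Pb))" "pairwise disjnt (Pa \<union> Pb)"
        using "2.prems"(3,5,6) split(1) by auto
      show "finite B \<and> B \<noteq> {}" if "B \<in> Pa \<union> Pb" for B
        using that "2.prems"(1,4) finite_cluster clusters_nonempty split(1) by blast
    qed (rule split(2))
    finally show ?thesis
      using split(1) by simp
  qed
qed simp_all

lemma ola_index_union_vertices:
  assumes "is_binary t" "distinct (leaves_list t)" "inj_on \<sigma> (cl t)"
    and "P \<subseteq> clusters t" "pairwise disjnt P" "\<Union>P \<in> clusters t"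
  shows "ola_index \<sigma> ` union_vertices t P = nonmin_indices \<sigma> P"
proof -
  obtain x where x: "x \<in> vertices t" "cl x = \<Union>P"
    using assms(6) unfolding clusters_def by blast
  have "P \<subseteq> clusters x"
  proof
    fix B assume "B \<in> P"
    then obtain y where "y \<in> vertices t" "B = cl y"
      using assms(4) unfolding clusters_def by blast
    moreover have "B \<subseteq> cl x"
      using \<open>B \<in> P\<close> x(2) by blast
    ultimately show "B \<in> clusters x"
      using in_vertices_if_cl_subset[OF assms(1,2) x(1)] unfolding clusters_def by blast
  qed
  moreover have "union_vertices t P = union_vertices x P"
    using union_vertices_subtree[OF assms(1,2) x(1)] x(2) by simp
  moreover have "is_binary x" "distinct (leaves_list x)" "inj_on \<sigma> (cl x)"
    using x(1) assms(1-3) is_binary_vertex distinct_leaves_list_vertex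
      inj_on_subset[OF assms(3) cl_subset] by blast+
  ultimately show ?thesis
    using ola_index_union_vertices_root assms(5) x(2) by metis
qed

lemma VI_eq_union_vertices:
  assumes "inj_on cl (set us)"
  shows "VI (Node us) t = union_vertices t (cl ` set us)"
proof -
  have "(\<exists>S\<subseteq>set us. 2 \<le> card S \<and> C = \<Union>(cl ` S)) \<longleftrightarrow>
      (\<exists>S'\<subseteq>cl ` set us. 2 \<le> card S' \<and> C = \<Union>S')" for C
  proof
    assume "\<exists>S\<subseteq>set us. 2 \<le> card S \<and> C = \<Union>(cl ` S)"
    then obtain S where "S \<subseteq> set us" "2 \<le> card S" "C = \<Union>(cl ` S)"
      by blast
    moreover have "card (cl ` S) = card S"
      using card_image inj_on_subset[OF assms \<open>S \<subseteq> set us\<close>] by blast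
    ultimately show "\<exists>S'\<subseteq>cl ` set us. 2 \<le> card S' \<and> C = \<Union>S'"
      by (metis image_mono)
  qed (use assms in \<open>auto simp: subset_image_iff card_image inj_on_subset\<close>)
  then show ?thesis
    unfolding VI_def union_vertices_def by simp
qed

lemma ola_index_VI_resolution:
  assumes "planted_tree L \<rho> T" "resolves L \<rho> T' T" "leaf_ordering L \<rho> \<sigma>"
    and "v \<in> vertices T" "v = Node us"
  shows "ola_index \<sigma> ` VI v T' = {- int (mu \<sigma> u) | u. u \<in> set us \<and> mu \<sigma> u \<noteq> Min (mu \<sigma> ` set us)}"
proof -
  have T': "is_binary T'" "distinct (leaves_list T')" "cl T' = L - {\<rho>}"
    using assms(2) unfolding resolves_def binary_tree_def planted_tree_def is_binary_iff cl_def
    by blast+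
  then have "inj_on \<sigma> (cl T')"
    using assms(3) unfolding leaf_ordering_def by (simp add: bij_betw_imp_inj_on)
  have us: "set us \<subseteq> vertices T"
    using assms(4,5) vertices_subset by fastforce
  have disjoint: "cl u1 \<inter> cl u2 = {}" if "u1 \<in> set us" "u2 \<in> set us" "u1 \<noteq> u2" for u1 u2
  proof -
    have "distinct (leaves_list v)"
      using assms(1,4) distinct_leaves_list_vertex unfolding planted_tree_def by blast
    then show ?thesis
      using distinct_concat_map_disjoint[OF _ that] assms(5) by (simp add: cl_def)
  qed
  have "inj_on cl (set us)"
    using disjoint us planted_tree_cl_nonempty[OF assms(1)] by (metis inf.idem inj_onI subsetD)
  moreover have "pairwise disjnt (cl ` set us)"
    using disjoint by (auto simp: pairwise_image disjnt_def pairwise_def)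
  moreover have "cl ` set us \<subseteq> clusters T'" "\<Union>(cl ` set us) \<in> clusters T'"
    using us assms(4,5) resolves_clusters[OF assms(2)] unfolding clusters_def by auto
  ultimately have "ola_index \<sigma> ` VI v T'
      = uminus ` int ` (mu \<sigma> ` set us - {Min (mu \<sigma> ` set us)})"
    using ola_index_union_vertices[OF T'(1,2) \<open>inj_on \<sigma> (cl T')\<close>]
    by (simp add: assms(5) VI_eq_union_vertices nonmin_indices_def image_image mu_eq_mu_set)
  then show ?thesis
    by auto
qed

theorem mainTheorem8:
  fixes L :: "'a set" and \<rho> :: 'a and T T' T'' v :: "'a tree" and \<sigma> :: "'a \<Rightarrow> nat"
    and us :: "'a tree list"
  assumes "planted_tree L \<rho> T"
    and "resolves L \<rho> T' T" and "resolves L \<rho> T'' T"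
    and "leaf_ordering L \<rho> \<sigma>"
    and "v \<in> vertices T" and "v = Node us" and "length us \<ge> 2"
  shows "ola_index \<sigma> ` VI v T' = {- int (mu \<sigma> u) | u. u \<in> set us \<and> mu \<sigma> u \<noteq> Min (mu \<sigma> ` set us)}
       \<and> ola_index \<sigma> ` VI v T'' = {- int (mu \<sigma> u) | u. u \<in> set us \<and> mu \<sigma> u \<noteq> Min (mu \<sigma> ` set us)}"
  using ola_index_VI_resolution[OF assms(1,2,4,5,6)] ola_index_VI_resolution[OF assms(1,3,4,5,6)]
  by blast

end
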